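(* Let $\Omega=\{z\in\mathbb{C}:|z|=1\}$. For $|\psi|<1$ let $BC_+(\psi)$ and $BC_-(\psi)$ be the distributions on $\Omega\times\Omega$ with densities $\frac{1}{4\pi^2}\frac{1-|\psi|^2}{|1-\psi z_v\overline{z_u}|^2}$ and $\frac{1}{4\pi^2}\frac{1-|\psi|^2}{|1-\psi z_v z_u|^2}$ respectively. Then: (i) if $(Z_{U1},Z_{V1})\sim BC_+(\psi_1)$ and $(Z_{U2},Z_{V2})\sim BC_+(\psi_2)$ are independent, then $(Z_{U1}Z_{U2},Z_{V1}Z_{V2})\sim BC_+(\psi_1\psi_2)$, and the same holds with $BC_+$ replaced by $BC_-$ throughout; (ii) if $(Z_{U1},Z_{V1})\sim BC_+(\psi_1)$ and $(Z_{U2},Z_{V2})\sim BC_-(\psi_2)$ are independent, then $(Z_{U1}Z_{U2},Z_{V1}Z_{V2})\sim BC_+(0)$; (iii) if $(Z_U,Z_V)\sim BC_\pm(\psi)$, then $(Z_U^n,Z_V^n)\sim BC_\pm(\psi^n)$ for every $n\in\mathbb{N}$ (with the same sign).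
   Context: Densities are with respect to arc-length measure on each circle. $BC_+(0)$ is the uniform distribution on the torus $\Omega\times\Omega$. *)

theory Defs
  imports "HOL-Probability.Probability"
begin

definition arc_measure :: "complex measure" where
  "arc_measure = distr (restrict_space lborel {0..<2*pi}) borel cis"

definition torus_measure :: "(complex \<times> complex) measure" where
  "torus_measure = arc_measure \<Otimes>\<^sub>M arc_measure"

definition BC_plus :: "complex \<Rightarrow> (complex \<times> complex) measure" where
  "BC_plus \<psi> = density torus_measure
     (\<lambda>(zu, zv). ennreal (1 / (4 * pi^2) * (1 - (cmod \<psi>)^2)
                            / (cmod (1 - \<psi> * zv * cnj zu))^2))"

definition BC_minus :: "complex \<Rightarrow> (complex \<times> complex) measure" where
  "BC_minus \<psi> = density torus_measure
     (\<lambda>(zu, zv). ennreal (1 / (4 * pi^2) * (1 - (cmod \<psi>)^2)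
                            / (cmod (1 - \<psi> * zv * zu))^2))"

definition has_law :: "'a measure \<Rightarrow> ('a \<Rightarrow> 'b) \<Rightarrow> 'b measure \<Rightarrow> bool" where
  "has_law M X N \<longleftrightarrow> X \<in> measurable M N \<and> distr M N X = N"

end

(*
  Everything is read off the trigonometric moments m(j, k) = E[Z_U^j Z_V^k], j, k in Z.
  Expanding the Poisson kernel, (1 - |w|^2) / |1 - w|^2 = sum_{n>=0} w^n + sum_{n>=1} cnj(w)^n,
  shows that BC_+(psi) resp. BC_-(psi) has m(j, k) = 0 unless j = -k resp. j = k, and that the
  surviving moments are psi^|k| for k <= 0 and cnj(psi)^k for k > 0. These values are
  multiplicative in psi and turn into those of psi^n when (j, k) is replaced by (n j, n k),
  while the moments of a product of independent variables multiply; for BC_+(psi1) times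
  BC_-(psi2) only m(0, 0) = 1 survives, which is the moment sequence of the uniform law BC_+(0).
  It remains that a finite measure on the torus is determined by its moments: trigonometric
  polynomials are uniformly dense in the continuous functions (Stone-Weierstrass), and integrals
  of continuous functions determine the measure of every closed set.
*)

theory Submission
  imports Defs
begin

abbreviation period_measure :: "real measure" where
  "period_measure \<equiv> restrict_space lborel {0..<2*pi}"

lemma finite_measure_period: "finite_measure period_measure"
  by (rule finite_measureI) (simp add: emeasure_restrict_space)

lemma measure_period: "measure period_measure {0..<2*pi} = 2*pi"
  by (subst measure_restrict_space) auto

lemma integrable_period:
  fixes h :: "real \<Rightarrow> 'b::{banach, second_countable_topology}"
  assumes "continuous_on UNIV h"
  shows "integrable period_measure h"
proof -
  have "set_integrable lborel {0..2*pi} h"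
    using assms by (intro borel_integrable_atLeastAtMost') (rule continuous_on_subset, auto)
  then have "set_integrable lborel {0..<2*pi} h"
    by (rule set_integrable_subset) auto
  then show ?thesis
    by (subst integrable_restrict_space) (auto simp: set_integrable_def)
qed

lemma integral_period_const [simp]:
  "integral\<^sup>L period_measure (\<lambda>t. c) = (2*pi) *\<^sub>R (c::'a::{banach, second_countable_topology})"
  using measure_period by simp

lemma integral_period_eq_interval_integral:
  fixes h :: "real \<Rightarrow> complex"
  assumes "continuous_on UNIV h"
  shows "integral\<^sup>L period_measure h = (LBINT t=ereal 0..ereal (2*pi). h t)"
proof -
  have [measurable]: "h \<in> borel_measurable borel"
    using assms by (rule borel_measurable_continuous_onI)
  have "integral\<^sup>L period_measure h = (\<integral>t. indicator {0..<2*pi} t *\<^sub>R h t \<partial>lborel)"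
    by (rule integral_restrict_space) auto
  also have "\<dots> = (\<integral>t. indicator {0<..<2*pi} t *\<^sub>R h t \<partial>lborel)"
  proof (rule integral_cong_AE)
    show "AE t in lborel. indicator {0..<2*pi} t *\<^sub>R h t = indicator {0<..<2*pi} t *\<^sub>R h t"
      using AE_lborel_singleton[of 0] by eventually_elim (auto simp: indicator_def)
  qed measurable
  also have "\<dots> = (LBINT t=ereal 0..ereal (2*pi). h t)"
    by (auto simp: interval_lebesgue_integral_def set_lebesgue_integral_def einterval_def
        intro!: Bochner_Integration.integral_cong split: split_indicator)
  finally show ?thesis .
qed

lemma measurable_period_id [measurable]: "(\<lambda>t. t) \<in> borel_measurable period_measure"
  by (rule measurable_restrict_space1) simp

lemma integral_period_cis:
  fixes m :: int
  shows "integral\<^sup>L period_measure (\<lambda>t. cis (of_int m * t)) = (if m = 0 then 2*pi else 0)"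
proof -
  let ?F = "\<lambda>t. cis (of_int m * t) / (\<i> * of_int m)"
  have "integral\<^sup>L period_measure (\<lambda>t. cis (of_int m * t)) = (LBINT t=ereal 0..ereal (2*pi). cis (of_int m * t))"
    by (intro integral_period_eq_interval_integral continuous_intros)
  also have "\<dots> = (if m = 0 then 2*pi else ?F (2*pi) - ?F 0)"
  proof (cases "m = 0")
    case True
    have "(LBINT t=ereal 0..ereal (2*pi). (1::complex)) = of_real (2*pi) - of_real 0"
      by (rule interval_integral_FTC_finite) (auto intro!: derivative_eq_intros)
    then show ?thesis using True by (simp add: zero_ereal_def)
  next
    case False
    have "(LBINT t=ereal 0..ereal (2*pi). cis (of_int m * t)) = ?F (2*pi) - ?F 0"
    proof (rule interval_integral_FTC_finite)
      fix t :: real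
      show "(?F has_vector_derivative cis (of_int m * t)) (at t within {min 0 (2*pi)..max 0 (2*pi)})"
        unfolding has_vector_derivative_def using False
        by (auto intro!: derivative_eq_intros ext simp: field_simps scaleR_conv_of_real)
    qed (auto intro!: continuous_intros)
    then show ?thesis using False by simp
  qed
  also have "?F (2*pi) = ?F 0"
    using cis_multiple_2pi[of "of_int m"] by (simp add: mult.commute)
  finally show ?thesis by simp
qed

section \<open>The Poisson kernel\<close>

definition poisson_kernel :: "complex \<Rightarrow> real" where
  "poisson_kernel z = (1 - (cmod z)^2) / (cmod (1 - z))^2"

definition poisson_coeff :: "complex \<Rightarrow> int \<Rightarrow> complex" where
  "poisson_coeff w k = (if k \<le> 0 then w ^ nat (-k) else cnj w ^ nat k)"

lemma borel_measurable_cis [measurable]: "cis \<in> borel_measurable borel"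
  by (intro borel_measurable_continuous_onI continuous_intros)

lemma borel_measurable_cnj [measurable]: "cnj \<in> borel_measurable borel"
  by (intro borel_measurable_continuous_onI continuous_intros)

lemma borel_measurable_poisson_kernel [measurable]: "poisson_kernel \<in> borel_measurable borel"
  unfolding poisson_kernel_def by measurable

lemma poisson_kernel_nonneg: "cmod z \<le> 1 \<Longrightarrow> 0 \<le> poisson_kernel z"
  unfolding poisson_kernel_def by (simp add: abs_square_le_1)

lemma poisson_kernel_le:
  assumes "cmod z < 1"
  shows "poisson_kernel z \<le> (1 - (cmod z)^2) / (1 - cmod z)^2"
  unfolding poisson_kernel_def
proof (rule divide_left_mono)
  have "1 - cmod z \<le> cmod (1 - z)"
    using norm_triangle_ineq2[of 1 z] by simp
  then show "(1 - cmod z)^2 \<le> (cmod (1 - z))^2"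
    using assms by (intro power_mono) auto
  show "0 < (cmod (1 - z))^2 * (1 - cmod z)^2"
    using assms \<open>1 - cmod z \<le> cmod (1 - z)\<close> by (intro mult_pos_pos) auto
qed (use assms in \<open>simp add: abs_square_le_1\<close>)

lemma poisson_kernel_eq_geometric:
  assumes "cmod z < 1"
  shows "complex_of_real (poisson_kernel z) = 1 / (1 - z) + 1 / (1 - cnj z) - 1"
proof -
  have nonzero: "1 - z \<noteq> 0" "1 - cnj z \<noteq> 0"
    using assms by (auto simp: right_minus_eq complex_cnj_one_iff)
  have "complex_of_real (poisson_kernel z) = (1 - z * cnj z) / ((1 - z) * (1 - cnj z))"
    unfolding poisson_kernel_def of_real_divide of_real_diff of_real_1 complex_norm_square
    by simp
  also have "\<dots> = 1 / (1 - z) + 1 / (1 - cnj z) - 1"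
    using nonzero by (simp add: divide_simps) (simp add: algebra_simps)
  finally show ?thesis .
qed

lemma cis_div_sums:
  assumes "cmod w < 1"
  shows "(\<lambda>n. w ^ n * cis (of_int (k + int n) * t)) sums (cis (of_int k * t) / (1 - w * cis t))"
proof -
  have "(\<lambda>n. (w * cis t) ^ n) sums (1 / (1 - w * cis t))"
    using assms by (intro geometric_sums) (simp add: norm_mult)
  from sums_mult[OF this, of "cis (of_int k * t)"]
  have "(\<lambda>n. cis (of_int k * t) * (w * cis t) ^ n) sums (cis (of_int k * t) / (1 - w * cis t))"
    by simp
  moreover have "cis (of_int k * t) * (w * cis t) ^ n = w ^ n * cis (of_int (k + int n) * t)" for n
    unfolding power_mult_distrib Complex.DeMoivre by (simp add: cis_mult algebra_simps)
  ultimately show ?thesis by simp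
qed

lemma integral_period_cis_div:
  fixes w :: complex and k :: int
  assumes w: "cmod w < 1"
  shows "integral\<^sup>L period_measure (\<lambda>t. cis (of_int k * t) / (1 - w * cis t))
    = (if k \<le> 0 then 2*pi * w ^ nat (-k) else 0)"
proof -
  define f where "f = (\<lambda>n t. w ^ n * cis (of_int (k + int n) * t))"
  have f_sums: "(\<lambda>n. f n t) sums (cis (of_int k * t) / (1 - w * cis t))" for t
    unfolding f_def using w by (rule cis_div_sums)
  have norm_f: "norm (f n t) = cmod w ^ n" for n t
    by (simp add: f_def norm_mult norm_power)
  have summable: "summable (\<lambda>n. cmod w ^ n)"
    using w by (intro summable_geometric) simp
  have "(\<lambda>n. integral\<^sup>L period_measure (f n)) sums (\<integral>t. (\<Sum>n. f n t) \<partial>period_measure)"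
  proof (rule sums_integral)
    show "integrable period_measure (f n)" for n
      unfolding f_def by (intro integrable_period continuous_intros)
    show "AE t in period_measure. summable (\<lambda>n. norm (f n t))"
      using summable by (simp add: norm_f)
    show "summable (\<lambda>n. \<integral>t. norm (f n t) \<partial>period_measure)"
      using summable_mult[OF summable, of "2*pi"] by (simp add: norm_f)
  qed
  also have "(\<lambda>t. \<Sum>n. f n t) = (\<lambda>t. cis (of_int k * t) / (1 - w * cis t))"
    using f_sums by (simp add: sums_iff)
  finally have integral_sums: "(\<lambda>n. integral\<^sup>L period_measure (f n))
      sums integral\<^sup>L period_measure (\<lambda>t. cis (of_int k * t) / (1 - w * cis t))" .
  have "integral\<^sup>L period_measure (f n) = w ^ n * (if k + int n = 0 then 2*pi else 0)" for n
    unfolding f_def by (simp only: integral_mult_right_zero integral_period_cis)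
  then have "integral\<^sup>L period_measure (f n)
      = (if n = nat (-k) then (if k \<le> 0 then 2*pi * w ^ n else 0) else 0)" for n
    by auto
  then have "(\<lambda>n. integral\<^sup>L period_measure (f n)) sums (if k \<le> 0 then 2*pi * w ^ nat (-k) else 0)"
    using sums_single[of "nat (-k)" "\<lambda>n. if k \<le> 0 then 2*pi * w ^ n else 0"] by simp
  with integral_sums show ?thesis
    by (rule sums_unique2)
qed

lemma poisson_kernel_fourier_coeff:
  fixes w :: complex and k :: int
  assumes w: "cmod w < 1"
  shows "integral\<^sup>L period_measure (\<lambda>t. cis (of_int k * t) * poisson_kernel (w * cis t))
    = 2*pi * poisson_coeff w k"
proof -
  have norm_w_cis: "cmod (w * cis t) < 1" for t
    using w by (simp add: norm_mult)
  then have "1 - w * cis t \<noteq> 0" for t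
    by (metis norm_one order_less_irrefl right_minus_eq)
  then have integrable_g: "integrable period_measure (\<lambda>t. cis (of_int j * t) / (1 - w * cis t))" for j
    by (intro integrable_period continuous_intros) auto
  have integrable_cis: "integrable period_measure (\<lambda>t. cis (of_int k * t))"
    by (intro integrable_period continuous_intros)
  let ?g = "\<lambda>j t. cis (of_int j * t) / (1 - w * cis t)"
  have integrand: "cis (of_int k * t) * poisson_kernel (w * cis t)
      = ?g k t + cnj (?g (-k) t) - cis (of_int k * t)" for t
    by (simp add: poisson_kernel_eq_geometric[OF norm_w_cis] cis_cnj algebra_simps)
  have "integral\<^sup>L period_measure (\<lambda>t. cis (of_int k * t) * poisson_kernel (w * cis t))
      = integral\<^sup>L period_measure (\<lambda>t. ?g k t + cnj (?g (-k) t) - cis (of_int k * t))"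
    by (simp only: integrand)
  also have "\<dots> = integral\<^sup>L period_measure (?g k) + cnj (integral\<^sup>L period_measure (?g (-k)))
      - integral\<^sup>L period_measure (\<lambda>t. cis (of_int k * t))"
    using integrable_g[of k] integrable_g[of "-k"] integrable_cis
    by (simp del: complex_cnj_divide)
  also have "\<dots> = 2*pi * poisson_coeff w k"
    unfolding integral_period_cis_div[OF w] integral_period_cis by (simp add: poisson_coeff_def)
  finally show ?thesis .
qed

lemma poisson_coeff_rotate: "poisson_coeff (w * cis x) k = poisson_coeff w k * cis (- of_int k * x)"
proof (cases "k \<le> 0")
  case True
  then have "real (nat (-k)) * x = - of_int k * x" by simp
  with True show ?thesis by (simp add: poisson_coeff_def power_mult_distrib Complex.DeMoivre)
next
  case False
  then have "- (real (nat k) * x) = - of_int k * x" by simp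
  with False show ?thesis
    by (simp add: poisson_coeff_def power_mult_distrib cis_cnj Complex.DeMoivre)
qed

lemma poisson_coeff_mult: "poisson_coeff \<psi>1 k * poisson_coeff \<psi>2 k = poisson_coeff (\<psi>1 * \<psi>2) k"
  by (simp add: poisson_coeff_def power_mult_distrib)

lemma poisson_coeff_power:
  assumes "n > 0"
  shows "poisson_coeff \<psi> (int n * k) = poisson_coeff (\<psi> ^ n) k"
proof -
  have "nat (- (int n * k)) = n * nat (-k)" "nat (int n * k) = n * nat k"
    by (simp_all add: nat_mult_distrib flip: mult_minus_right)
  then show ?thesis
    using assms by (auto simp: poisson_coeff_def power_mult zero_le_mult_iff mult_le_0_iff)
qed

section \<open>Trigonometric moments of the bicircular distributions\<close>

text \<open>On the torus \<open>cnj z = 1 / z\<close>, so these are the characters \<open>(u, v) \<mapsto> u^(a-b) v^(c-d)\<close>;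
  written with conjugates they are continuous on all of \<open>\<complex>\<^sup>2\<close> and closed under conjugation.\<close>
definition torus_monomial :: "nat \<Rightarrow> nat \<Rightarrow> nat \<Rightarrow> nat \<Rightarrow> complex \<times> complex \<Rightarrow> complex" where
  "torus_monomial a b c d z = fst z ^ a * cnj (fst z) ^ b * (snd z ^ c * cnj (snd z) ^ d)"

lemma borel_measurable_torus_monomial [measurable]:
  "torus_monomial a b c d \<in> borel_measurable (borel \<Otimes>\<^sub>M borel)"
  unfolding torus_monomial_def by measurable

lemma torus_monomial_cis:
  "torus_monomial a b c d (cis s, cis t) = cis (of_int (int a - int b) * s) * cis (of_int (int c - int d) * t)"
  by (simp add: torus_monomial_def Complex.DeMoivre cis_cnj cis_mult algebra_simps)

lemma torus_monomial_0: "torus_monomial 0 0 0 0 = (\<lambda>_. 1)"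
  by (simp add: torus_monomial_def fun_eq_iff)

lemma sets_torus_measure [measurable_cong]: "sets torus_measure = sets (borel \<Otimes>\<^sub>M borel)"
  unfolding torus_measure_def arc_measure_def by (rule sets_pair_measure_cong) auto

lemma torus_measure_eq_distr:
  "torus_measure = distr (period_measure \<Otimes>\<^sub>M period_measure) (borel \<Otimes>\<^sub>M borel) (\<lambda>(s, t). (cis s, cis t))"
proof -
  have "finite_measure (distr period_measure borel cis)"
    using finite_measure_period by (rule finite_measure.finite_measure_distr) measurable
  then have "sigma_finite_measure (distr period_measure borel cis)"
    by (simp add: finite_measure_def)
  then show ?thesis
    unfolding torus_measure_def arc_measure_def
    by (intro pair_measure_distr) (auto simp: finite_measure_period finite_measure_def)
qed

lemma integral_period_pair_poisson:
  fixes \<psi> :: complex and \<sigma> j k :: int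
  assumes \<psi>: "cmod \<psi> < 1"
  shows "integral\<^sup>L (period_measure \<Otimes>\<^sub>M period_measure)
      (\<lambda>(s, t). poisson_kernel (\<psi> * cis (of_int \<sigma> * s) * cis t) * (cis (of_int j * s) * cis (of_int k * t)))
    = (if j = \<sigma> * k then 4 * pi^2 * poisson_coeff \<psi> k else 0)"
proof -
  interpret pair_sigma_finite period_measure period_measure
    using finite_measure_period by (simp add: pair_sigma_finite_def finite_measure_def)
  interpret finite_measure "period_measure \<Otimes>\<^sub>M period_measure"
    using finite_measure_period by (rule finite_measure_pair_measure) (rule finite_measure_period)
  let ?f = "\<lambda>s t. poisson_kernel (\<psi> * cis (of_int \<sigma> * s) * cis t) * (cis (of_int j * s) * cis (of_int k * t))"
  have norm_rotated: "cmod (\<psi> * cis a * cis b) = cmod \<psi>" for a b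
    by (simp add: norm_mult)
  have bound: "norm (?f s t) \<le> (1 - (cmod \<psi>)^2) / (1 - cmod \<psi>)^2" for s t
    using poisson_kernel_le[of "\<psi> * cis (of_int \<sigma> * s) * cis t"]
      poisson_kernel_nonneg[of "\<psi> * cis (of_int \<sigma> * s) * cis t"] \<psi>
    by (simp add: norm_mult norm_rotated)
  have "(\<lambda>(s, t). ?f s t) \<in> borel_measurable (period_measure \<Otimes>\<^sub>M period_measure)"
    by measurable
  then have "integrable (period_measure \<Otimes>\<^sub>M period_measure) (\<lambda>(s, t). ?f s t)"
    using bound by (intro integrable_const_bound[where B="(1 - (cmod \<psi>)^2) / (1 - cmod \<psi>)^2"])
      (auto split: prod.split)
  then have "integral\<^sup>L (period_measure \<Otimes>\<^sub>M period_measure) (\<lambda>(s, t). ?f s t)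
      = (\<integral>s. (\<integral>t. ?f s t \<partial>period_measure) \<partial>period_measure)"
    by (rule integral_fst[symmetric])
  also have "\<dots> = (\<integral>s. 2*pi * poisson_coeff \<psi> k * cis (of_int (j - \<sigma> * k) * s) \<partial>period_measure)"
  proof (intro Bochner_Integration.integral_cong refl)
    fix s
    have "(\<integral>t. ?f s t \<partial>period_measure) = cis (of_int j * s)
        * (\<integral>t. cis (of_int k * t) * poisson_kernel ((\<psi> * cis (of_int \<sigma> * s)) * cis t) \<partial>period_measure)"
      by (subst integral_mult_right_zero[symmetric]) (simp add: ac_simps)
    also have "\<dots> = cis (of_int j * s) * (2*pi * poisson_coeff (\<psi> * cis (of_int \<sigma> * s)) k)"
      using \<psi> by (simp only: poisson_kernel_fourier_coeff norm_rotated[of _ 0, simplified])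
    also have "\<dots> = 2*pi * poisson_coeff \<psi> k * cis (of_int (j - \<sigma> * k) * s)"
      by (simp add: poisson_coeff_rotate cis_mult algebra_simps)
    finally show "(\<integral>t. ?f s t \<partial>period_measure) = 2*pi * poisson_coeff \<psi> k * cis (of_int (j - \<sigma> * k) * s)" .
  qed
  also have "\<dots> = (if j = \<sigma> * k then 4 * pi^2 * poisson_coeff \<psi> k else 0)"
    unfolding integral_mult_right_zero integral_period_cis by (simp add: power2_eq_square)
  finally show ?thesis .
qed

text \<open>The densities of \<open>BC_plus\<close> and \<open>BC_minus\<close> are Poisson kernels only on the torus, so \<open>h\<close>
  is constrained there alone.\<close>
lemma integral_torus_poisson_density:
  fixes h :: "complex \<times> complex \<Rightarrow> real" and \<sigma> :: int
  assumes \<psi>: "cmod \<psi> < 1"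
    and [measurable]: "h \<in> borel_measurable (borel \<Otimes>\<^sub>M borel)"
    and "\<And>z. 0 \<le> h z"
    and h_cis: "\<And>s t. h (cis s, cis t) = poisson_kernel (\<psi> * cis (of_int \<sigma> * s) * cis t) / (4 * pi^2)"
  shows "integral\<^sup>L (density torus_measure h) (torus_monomial a b c d)
    = (if int a - int b = \<sigma> * (int c - int d) then poisson_coeff \<psi> (int c - int d) else 0)"
proof -
  have "integral\<^sup>L (density torus_measure h) (torus_monomial a b c d)
      = integral\<^sup>L torus_measure (\<lambda>z. h z *\<^sub>R torus_monomial a b c d z)"
    using assms(3) by (intro integral_density) auto
  also have "\<dots> = integral\<^sup>L (period_measure \<Otimes>\<^sub>M period_measure)
      (\<lambda>(s, t). h (cis s, cis t) *\<^sub>R torus_monomial a b c d (cis s, cis t))"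
    unfolding torus_measure_eq_distr by (subst integral_distr) (measurable, simp add: split_beta')
  also have "\<dots> = integral\<^sup>L (period_measure \<Otimes>\<^sub>M period_measure)
      (\<lambda>(s, t). poisson_kernel (\<psi> * cis (of_int \<sigma> * s) * cis t)
        * (cis (of_int (int a - int b) * s) * cis (of_int (int c - int d) * t))) / (4 * pi^2)"
    by (simp add: h_cis torus_monomial_cis scaleR_conv_of_real split_beta')
  also have "\<dots> = (if int a - int b = \<sigma> * (int c - int d) then poisson_coeff \<psi> (int c - int d) else 0)"
    unfolding integral_period_pair_poisson[OF \<psi>] by simp
  finally show ?thesis .
qed

lemma BC_plus_moment:
  assumes "cmod \<psi> < 1"
  shows "integral\<^sup>L (BC_plus \<psi>) (torus_monomial a b c d)
    = (if int a - int b = - (int c - int d) then poisson_coeff \<psi> (int c - int d) else 0)"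
  using integral_torus_poisson_density[OF assms, where \<sigma>="-1"] assms
  unfolding BC_plus_def case_prod_beta
  by (simp add: poisson_kernel_def norm_mult cis_cnj abs_square_le_1 ac_simps)

lemma BC_minus_moment:
  assumes "cmod \<psi> < 1"
  shows "integral\<^sup>L (BC_minus \<psi>) (torus_monomial a b c d)
    = (if int a - int b = int c - int d then poisson_coeff \<psi> (int c - int d) else 0)"
  using integral_torus_poisson_density[OF assms, where \<sigma>=1] assms
  unfolding BC_minus_def case_prod_beta
  by (simp add: poisson_kernel_def norm_mult abs_square_le_1 ac_simps)

section \<open>Finite measures on the torus are determined by their moments\<close>

abbreviation torus :: "(complex \<times> complex) set" where
  "torus \<equiv> sphere 0 1 \<times> sphere 0 1"

lemma compact_torus: "compact torus"
  by (intro compact_Times compact_sphere)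

lemma torus_in_sets: "torus \<in> sets (borel \<Otimes>\<^sub>M borel)"
  unfolding borel_prod by (intro borel_closed closed_Times closed_sphere)

inductive_set trig_poly :: "(complex \<times> complex \<Rightarrow> complex) set" where
  monomial: "torus_monomial a b c d \<in> trig_poly"
| scale: "p \<in> trig_poly \<Longrightarrow> (\<lambda>z. k * p z) \<in> trig_poly"
| add: "p \<in> trig_poly \<Longrightarrow> q \<in> trig_poly \<Longrightarrow> (\<lambda>z. p z + q z) \<in> trig_poly"

lemma torus_monomial_mult:
  "torus_monomial a b c d z * torus_monomial a' b' c' d' z = torus_monomial (a+a') (b+b') (c+c') (d+d') z"
  by (simp add: torus_monomial_def power_add algebra_simps)

lemma cnj_torus_monomial: "cnj (torus_monomial a b c d z) = torus_monomial b a d c z"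
  by (simp add: torus_monomial_def algebra_simps)

lemma trig_poly_mult_monomial:
  "p \<in> trig_poly \<Longrightarrow> (\<lambda>z. p z * torus_monomial a b c d z) \<in> trig_poly"
proof (induction rule: trig_poly.induct)
  case (monomial a' b' c' d')
  then show ?case unfolding torus_monomial_mult by (rule trig_poly.monomial)
next
  case (scale p k)
  then show ?case using trig_poly.scale[of _ k] by (simp add: mult.assoc)
next
  case (add p q)
  then show ?case using trig_poly.add by (simp add: distrib_right)
qed

lemma trig_poly_mult:
  assumes "p \<in> trig_poly"
  shows "q \<in> trig_poly \<Longrightarrow> (\<lambda>z. p z * q z) \<in> trig_poly"
proof (induction rule: trig_poly.induct)
  case (monomial a b c d)
  show ?case using assms by (rule trig_poly_mult_monomial)
next
  case (scale q k)
  then show ?case using trig_poly.scale[of _ k] by (simp add: algebra_simps)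
next
  case (add q r)
  then show ?case using trig_poly.add by (simp add: distrib_left)
qed

lemma trig_poly_cnj: "p \<in> trig_poly \<Longrightarrow> (\<lambda>z. cnj (p z)) \<in> trig_poly"
proof (induction rule: trig_poly.induct)
  case (monomial a b c d)
  show ?case unfolding cnj_torus_monomial by (rule trig_poly.monomial)
next
  case (scale p k)
  then show ?case using trig_poly.scale[of _ "cnj k"] by simp
next
  case (add p q)
  then show ?case using trig_poly.add by simp
qed

lemma trig_poly_continuous: "p \<in> trig_poly \<Longrightarrow> continuous_on UNIV p"
  by (induction rule: trig_poly.induct) (auto simp: torus_monomial_def intro!: continuous_intros)

definition real_trig_poly :: "(complex \<times> complex \<Rightarrow> real) set" where
  "real_trig_poly = (\<lambda>p z. Re (p z)) ` trig_poly"

lemma Re_in_real_trig_poly: "p \<in> trig_poly \<Longrightarrow> (\<lambda>z. Re (p z)) \<in> real_trig_poly"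
  unfolding real_trig_poly_def by (rule imageI)

lemma function_ring_on_real_trig_poly: "function_ring_on real_trig_poly torus"
proof
  show "compact torus" by (rule compact_torus)
next
  fix f assume "f \<in> real_trig_poly"
  then obtain p where "p \<in> trig_poly" "f = (\<lambda>z. Re (p z))"
    by (auto simp: real_trig_poly_def)
  then show "continuous_on torus f"
    by (metis continuous_on_Re continuous_on_subset subset_UNIV trig_poly_continuous)
next
  fix f g assume "f \<in> real_trig_poly" "g \<in> real_trig_poly"
  then obtain p q where pq: "p \<in> trig_poly" "q \<in> trig_poly" "f = (\<lambda>z. Re (p z))" "g = (\<lambda>z. Re (q z))"
    by (auto simp: real_trig_poly_def)
  have "(\<lambda>z. p z + q z) \<in> trig_poly"
    using pq by (intro trig_poly.add)
  from Re_in_real_trig_poly[OF this] show "(\<lambda>x. f x + g x) \<in> real_trig_poly"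
    using pq by simp
  \<comment> \<open>\<open>Re p * Re q = Re ((p q + p (cnj q)) / 2)\<close>\<close>
  have "(\<lambda>z. (1/2) * (p z * q z) + (1/2) * (p z * cnj (q z))) \<in> trig_poly"
    using pq by (intro trig_poly.add trig_poly.scale trig_poly_mult trig_poly_cnj)
  from Re_in_real_trig_poly[OF this] show "(\<lambda>x. f x * g x) \<in> real_trig_poly"
    using pq by (simp add: algebra_simps add_divide_distrib[symmetric])
next
  fix c :: real
  have "(\<lambda>z. of_real c * torus_monomial 0 0 0 0 z) \<in> trig_poly"
    by (intro trig_poly.scale trig_poly.monomial)
  from Re_in_real_trig_poly[OF this] show "(\<lambda>_. c) \<in> real_trig_poly"
    by (simp add: torus_monomial_def)
next
  fix x y :: "complex \<times> complex"
  assume "x \<noteq> y"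
  have coordinates: "(\<lambda>z. Re (k * fst z)) \<in> real_trig_poly" "(\<lambda>z. Re (k * snd z)) \<in> real_trig_poly" for k
    using Re_in_real_trig_poly[OF trig_poly.scale[OF trig_poly.monomial, of k 1 0 0 0]]
      Re_in_real_trig_poly[OF trig_poly.scale[OF trig_poly.monomial, of k 0 0 1 0]]
    by (simp_all add: torus_monomial_def)
  have "Re (fst x) \<noteq> Re (fst y) \<or> Re (- \<i> * fst x) \<noteq> Re (- \<i> * fst y)
      \<or> Re (snd x) \<noteq> Re (snd y) \<or> Re (- \<i> * snd x) \<noteq> Re (- \<i> * snd y)"
    using \<open>x \<noteq> y\<close> by (auto simp: complex_eq_iff prod_eq_iff)
  then show "\<exists>f\<in>real_trig_poly. f x \<noteq> f y"
    using coordinates[of 1] coordinates[of "- \<i>"]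
    by (elim disjE) (rule bexI[rotated], assumption, simp)+
qed

definition finite_torus_measure :: "(complex \<times> complex) measure \<Rightarrow> bool" where
  "finite_torus_measure \<mu> \<longleftrightarrow>
     finite_measure \<mu> \<and> sets \<mu> = sets (borel \<Otimes>\<^sub>M borel) \<and> (AE z in \<mu>. z \<in> torus)"

lemma borel_measurable_continuous_on_pair:
  fixes f :: "complex \<times> complex \<Rightarrow> 'b::topological_space"
  assumes "sets M = sets (borel \<Otimes>\<^sub>M borel)" "continuous_on UNIV f"
  shows "f \<in> borel_measurable M"
  using assms by (simp add: measurable_cong_sets[OF assms(1) refl] borel_prod
      borel_measurable_continuous_onI)

lemma (in finite_measure) abs_integral_le_bound:
  fixes h :: "'a \<Rightarrow> real"
  assumes "integrable M h" "AE x in M. \<bar>h x\<bar> \<le> e"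
  shows "\<bar>integral\<^sup>L M h\<bar> \<le> e * measure M (space M)"
proof -
  have "\<bar>integral\<^sup>L M h\<bar> \<le> (\<integral>x. \<bar>h x\<bar> \<partial>M)"
    using integral_norm_bound[of M h] by simp
  also have "\<dots> \<le> (\<integral>x. e \<partial>M)"
    using assms by (intro integral_mono_AE) auto
  finally show ?thesis by (simp add: mult.commute)
qed

lemma integrable_trig_poly:
  assumes "finite_torus_measure \<mu>" "p \<in> trig_poly"
  shows "integrable \<mu> p"
proof -
  interpret finite_measure \<mu>
    using assms(1) by (simp add: finite_torus_measure_def)
  have "compact (p ` torus)"
    using trig_poly_continuous[OF assms(2)]
    by (intro compact_continuous_image compact_torus) (rule continuous_on_subset, auto)
  then obtain B where "\<forall>z\<in>torus. norm (p z) \<le> B"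
    by (auto dest!: compact_imp_bounded simp: bounded_iff)
  moreover have "p \<in> borel_measurable \<mu>"
    using assms trig_poly_continuous
    by (intro borel_measurable_continuous_on_pair) (auto simp: finite_torus_measure_def)
  ultimately show ?thesis
    using assms(1) unfolding finite_torus_measure_def
    by (intro integrable_const_bound[of _ B]) (auto elim: eventually_mono)
qed

lemma tendsto_integral_infdist_cutoff:
  fixes M :: "(complex \<times> complex) measure"
  assumes "finite_measure M" and sets_M: "sets M = sets (borel \<Otimes>\<^sub>M borel)"
    and F: "closed F" "F \<noteq> {}"
  shows "(\<lambda>n. \<integral>z. max 0 (1 - real n * infdist z F) \<partial>M) \<longlonglongrightarrow> measure M F"
proof -
  interpret finite_measure M by fact
  have space_M: "space M = UNIV"
    using sets_eq_imp_space_eq[OF sets_M] by (simp add: space_pair_measure)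
  have "(\<lambda>n. max 0 (1 - real n * infdist z F)) \<longlonglongrightarrow> indicator F z" for z
  proof (cases "z \<in> F")
    case False
    then have "infdist z F > 0"
      using in_closed_iff_infdist_zero[OF F] infdist_nonneg[of z F] by auto
    then obtain N :: nat where "1 < real N * infdist z F"
      using ex_less_of_nat_mult by blast
    have "max 0 (1 - real n * infdist z F) = 0" if "N \<le> n" for n
    proof -
      have "real N * infdist z F \<le> real n * infdist z F"
        using that \<open>infdist z F > 0\<close> by (intro mult_right_mono) auto
      then show ?thesis
        using \<open>1 < real N * infdist z F\<close> by simp
    qed
    then have "eventually (\<lambda>n. max 0 (1 - real n * infdist z F) = 0) sequentially"
      by (rule eventually_sequentiallyI)
    then show ?thesis
      using False by (simp add: tendsto_eventually)
  qed simp
  moreover have "F \<in> sets M"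
    unfolding sets_M borel_prod using F(1) by (rule borel_closed)
  moreover have "(\<lambda>z. max 0 (1 - real n * infdist z F)) \<in> borel_measurable M" for n
    by (intro borel_measurable_continuous_on_pair sets_M continuous_intros)
  ultimately have "(\<lambda>n. \<integral>z. max 0 (1 - real n * infdist z F) \<partial>M) \<longlonglongrightarrow> integral\<^sup>L M (indicator F)"
    using infdist_nonneg[of _ F]
    by (intro integral_dominated_convergence[where w="\<lambda>_. 1"]) (auto simp: space_M)
  then show ?thesis by (simp add: space_M)
qed

lemma integral_approx_trig_poly:
  fixes f :: "complex \<times> complex \<Rightarrow> real"
  assumes \<kappa>: "finite_torus_measure \<kappa>" and f: "continuous_on UNIV f" "\<And>z. \<bar>f z\<bar> \<le> B"
    and p: "p \<in> trig_poly" and approx: "\<forall>z\<in>torus. \<bar>f z - Re (p z)\<bar> \<le> \<delta>"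
  shows "\<bar>integral\<^sup>L \<kappa> f - Re (integral\<^sup>L \<kappa> p)\<bar> \<le> \<delta> * measure \<kappa> (space \<kappa>)"
proof -
  interpret finite_measure \<kappa>
    using \<kappa> by (simp add: finite_torus_measure_def)
  have "integrable \<kappa> f"
    using \<kappa> f unfolding finite_torus_measure_def
    by (intro integrable_const_bound[where B=B] borel_measurable_continuous_on_pair) auto
  moreover have "integrable \<kappa> p"
    using \<kappa> p by (rule integrable_trig_poly)
  moreover have "AE z in \<kappa>. \<bar>f z - Re (p z)\<bar> \<le> \<delta>"
    using \<kappa> approx unfolding finite_torus_measure_def by (auto elim!: eventually_mono)
  ultimately show ?thesis
    using abs_integral_le_bound[of "\<lambda>z. f z - Re (p z)" \<delta>] by simp
qed

context
  fixes \<mu> \<nu> :: "(complex \<times> complex) measure"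
  assumes \<mu>: "finite_torus_measure \<mu>" and \<nu>: "finite_torus_measure \<nu>"
    and same_moments: "\<And>a b c d. integral\<^sup>L \<mu> (torus_monomial a b c d) = integral\<^sup>L \<nu> (torus_monomial a b c d)"
begin

lemma integral_trig_poly_eq: "p \<in> trig_poly \<Longrightarrow> integral\<^sup>L \<mu> p = integral\<^sup>L \<nu> p"
proof (induction rule: trig_poly.induct)
  case (add p q)
  then show ?case
    using integrable_trig_poly[OF \<mu>] integrable_trig_poly[OF \<nu>] by simp
qed (simp_all add: same_moments)

lemma integral_continuous_eq:
  fixes f :: "complex \<times> complex \<Rightarrow> real"
  assumes f: "continuous_on UNIV f" "\<And>z. \<bar>f z\<bar> \<le> B"
  shows "integral\<^sup>L \<mu> f = integral\<^sup>L \<nu> f"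
proof -
  define M where "M = measure \<mu> (space \<mu>) + measure \<nu> (space \<nu>)"
  have "M \<ge> 0" by (simp add: M_def)
  have "\<bar>integral\<^sup>L \<mu> f - integral\<^sup>L \<nu> f\<bar> \<le> 0 + e" if "e > 0" for e
  proof -
    have "continuous_on torus f"
      using f(1) continuous_on_subset by blast
    with that \<open>M \<ge> 0\<close> obtain g where "g \<in> real_trig_poly" and "\<forall>z\<in>torus. \<bar>f z - g z\<bar> < e / (M + 1)"
      using function_ring_on.Stone_Weierstrass_basic[OF function_ring_on_real_trig_poly, of f "e / (M + 1)"]
      by auto
    then obtain p where p: "p \<in> trig_poly" and approx: "\<forall>z\<in>torus. \<bar>f z - Re (p z)\<bar> \<le> e / (M + 1)"
      by (fastforce simp: real_trig_poly_def)
    from integral_approx_trig_poly[OF \<mu> f p approx] integral_approx_trig_poly[OF \<nu> f p approx]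
    have "\<bar>integral\<^sup>L \<mu> f - integral\<^sup>L \<nu> f\<bar> \<le> e / (M + 1) * M"
      using integral_trig_poly_eq[OF p] by (simp add: M_def distrib_left)
    also have "\<dots> \<le> e"
      using \<open>M \<ge> 0\<close> that by (simp add: field_simps)
    finally show ?thesis by simp
  qed
  then show ?thesis
    using field_le_epsilon[of "\<bar>integral\<^sup>L \<mu> f - integral\<^sup>L \<nu> f\<bar>" 0] by simp
qed

lemma measure_closed_eq:
  assumes "closed F"
  shows "measure \<mu> F = measure \<nu> F"
proof (cases "F = {}")
  case False
  let ?s = "\<lambda>n z. max 0 (1 - real n * infdist z F)"
  have "integral\<^sup>L \<mu> (?s n) = integral\<^sup>L \<nu> (?s n)" for n
    by (intro integral_continuous_eq[where B=1] continuous_intros) (auto simp: infdist_nonneg)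
  moreover have "(\<lambda>n. integral\<^sup>L \<mu> (?s n)) \<longlonglongrightarrow> measure \<mu> F"
    and "(\<lambda>n. integral\<^sup>L \<nu> (?s n)) \<longlonglongrightarrow> measure \<nu> F"
    using \<mu> \<nu> assms False unfolding finite_torus_measure_def
    by (auto intro: tendsto_integral_infdist_cutoff)
  ultimately show ?thesis
    using LIMSEQ_unique by auto
qed simp

lemma finite_torus_measure_eqI: "\<mu> = \<nu>"
proof (rule measure_eqI_generator_eq[where E="Collect closed" and \<Omega>=UNIV and A="\<lambda>_. UNIV"])
  have "sets (borel \<Otimes>\<^sub>M borel) = sigma_sets UNIV (Collect closed :: (complex \<times> complex) set set)"
    unfolding borel_prod by (subst borel_eq_closed) (rule sets_measure_of, simp)
  then show "sets \<mu> = sigma_sets UNIV (Collect closed)" "sets \<nu> = sigma_sets UNIV (Collect closed)"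
    using \<mu> \<nu> by (simp_all add: finite_torus_measure_def)
  show "emeasure \<mu> X = emeasure \<nu> X" if "X \<in> Collect closed" for X
    using that measure_closed_eq[of X] \<mu> \<nu>
    by (simp add: finite_torus_measure_def finite_measure.emeasure_eq_measure)
  show "emeasure \<mu> UNIV \<noteq> \<infinity>"
    using \<mu> by (simp add: finite_torus_measure_def finite_measure.emeasure_finite)
qed (auto intro!: Int_stableI)

end

lemma AE_torus_measure_in_torus: "AE z in torus_measure. z \<in> torus"
proof -
  have "{z \<in> space (borel \<Otimes>\<^sub>M borel). z \<in> torus} \<in> sets (borel \<Otimes>\<^sub>M borel)"
    using torus_in_sets by (simp add: space_pair_measure)
  then show ?thesis
    unfolding torus_measure_eq_distr by (subst AE_distr_iff) (auto simp: mem_Times_iff)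
qed

lemma finite_torus_measure_density:
  assumes "finite_measure (density torus_measure h)" "h \<in> borel_measurable (borel \<Otimes>\<^sub>M borel)"
  shows "finite_torus_measure (density torus_measure h)"
proof -
  have "h \<in> borel_measurable torus_measure"
    using assms(2) by (simp add: measurable_cong_sets[OF sets_torus_measure refl])
  then show ?thesis
    using assms(1) AE_torus_measure_in_torus
    by (auto simp: finite_torus_measure_def AE_density sets_torus_measure elim: eventually_mono)
qed

lemma prob_spaceI_integral_1:
  assumes "integral\<^sup>L M (\<lambda>_. 1 :: complex) = 1"
  shows "prob_space M"
proof
  have "measure M (space M) = 1"
    using assms by (simp add: scaleR_conv_of_real)
  then show "emeasure M (space M) = 1"
    by (metis emeasure_eq_ennreal_measure ennreal_1 measure_zero_top zero_neq_one)
qed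

lemma prob_space_BC_plus: "cmod \<psi> < 1 \<Longrightarrow> prob_space (BC_plus \<psi>)"
  using BC_plus_moment[of \<psi> 0 0 0 0]
  by (intro prob_spaceI_integral_1) (simp add: torus_monomial_0 poisson_coeff_def)

lemma prob_space_BC_minus: "cmod \<psi> < 1 \<Longrightarrow> prob_space (BC_minus \<psi>)"
  using BC_minus_moment[of \<psi> 0 0 0 0]
  by (intro prob_spaceI_integral_1) (simp add: torus_monomial_0 poisson_coeff_def)

lemma finite_torus_measure_BC_plus: "cmod \<psi> < 1 \<Longrightarrow> finite_torus_measure (BC_plus \<psi>)"
  using prob_space_BC_plus[of \<psi>] unfolding BC_plus_def
  by (intro finite_torus_measure_density) (auto simp: prob_space_def)

lemma finite_torus_measure_BC_minus: "cmod \<psi> < 1 \<Longrightarrow> finite_torus_measure (BC_minus \<psi>)"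
  using prob_space_BC_minus[of \<psi>] unfolding BC_minus_def
  by (intro finite_torus_measure_density) (auto simp: prob_space_def)

section \<open>Laws of products and powers\<close>

lemma torus_monomial_mult_pair:
  "torus_monomial a b c d (u1 * u2, v1 * v2) = torus_monomial a b c d (u1, v1) * torus_monomial a b c d (u2, v2)"
  by (simp add: torus_monomial_def power_mult_distrib algebra_simps)

lemma torus_monomial_power_pair:
  "torus_monomial a b c d (u ^ n, v ^ n) = torus_monomial (n*a) (n*b) (n*c) (n*d) (u, v)"
  by (simp add: torus_monomial_def power_mult[symmetric] mult.commute)

lemma has_law_torusD:
  assumes law: "has_law M X \<mu>" and \<mu>: "finite_torus_measure \<mu>"
  shows "X \<in> measurable M (borel \<Otimes>\<^sub>M borel)"
    and "AE \<omega> in M. X \<omega> \<in> torus"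
    and "integrable M (\<lambda>\<omega>. torus_monomial a b c d (X \<omega>))"
    and "integral\<^sup>L M (\<lambda>\<omega>. torus_monomial a b c d (X \<omega>)) = integral\<^sup>L \<mu> (torus_monomial a b c d)"
proof -
  have sets_\<mu>: "sets \<mu> = sets (borel \<Otimes>\<^sub>M borel)"
    using \<mu> by (simp add: finite_torus_measure_def)
  show X: "X \<in> measurable M (borel \<Otimes>\<^sub>M borel)"
    using law by (simp add: has_law_def measurable_cong_sets[OF refl sets_\<mu>])
  have distr_X: "distr M (borel \<Otimes>\<^sub>M borel) X = \<mu>"
    using law distr_cong[OF refl sets_\<mu>, where f=X and g=X] by (simp add: has_law_def)
  have "{z \<in> space (borel \<Otimes>\<^sub>M borel). z \<in> torus} \<in> sets (borel \<Otimes>\<^sub>M borel)"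
    using torus_in_sets by (simp add: space_pair_measure)
  then show "AE \<omega> in M. X \<omega> \<in> torus"
    using \<mu> unfolding finite_torus_measure_def distr_X[symmetric] by (subst (asm) AE_distr_iff[OF X]) auto
  show "integrable M (\<lambda>\<omega>. torus_monomial a b c d (X \<omega>))"
    using integrable_trig_poly[OF \<mu> trig_poly.monomial]
    unfolding distr_X[symmetric] by (subst (asm) integrable_distr_eq[OF X]) auto
  show "integral\<^sup>L M (\<lambda>\<omega>. torus_monomial a b c d (X \<omega>)) = integral\<^sup>L \<mu> (torus_monomial a b c d)"
    unfolding distr_X[symmetric] by (rule integral_distr[OF X, symmetric]) measurable
qed

lemma has_law_torusI:
  assumes "prob_space M" and Y: "Y \<in> measurable M (borel \<Otimes>\<^sub>M borel)" and \<nu>: "finite_torus_measure \<nu>"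
    and "AE \<omega> in M. Y \<omega> \<in> torus"
    and moments: "\<And>a b c d. integral\<^sup>L M (\<lambda>\<omega>. torus_monomial a b c d (Y \<omega>)) = integral\<^sup>L \<nu> (torus_monomial a b c d)"
  shows "has_law M Y \<nu>"
proof -
  have sets_\<nu>: "sets \<nu> = sets (borel \<Otimes>\<^sub>M borel)"
    using \<nu> by (simp add: finite_torus_measure_def)
  have "{z \<in> space (borel \<Otimes>\<^sub>M borel). z \<in> torus} \<in> sets (borel \<Otimes>\<^sub>M borel)"
    using torus_in_sets by (simp add: space_pair_measure)
  then have "finite_torus_measure (distr M (borel \<Otimes>\<^sub>M borel) Y)"
    using assms(1,4) prob_space.prob_space_distr[OF assms(1) Y]
    by (simp add: finite_torus_measure_def AE_distr_iff[OF Y] prob_space_def)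
  then have "distr M (borel \<Otimes>\<^sub>M borel) Y = \<nu>"
    using \<nu> by (rule finite_torus_measure_eqI) (simp add: integral_distr[OF Y] moments)
  then show ?thesis
    using Y distr_cong[OF refl sets_\<nu>, where f=Y and g=Y]
    by (simp add: has_law_def measurable_cong_sets[OF refl sets_\<nu>])
qed

lemma has_law_mult:
  assumes M: "prob_space M"
    and law1: "has_law M (\<lambda>\<omega>. (U1 \<omega>, V1 \<omega>)) \<mu>1" and law2: "has_law M (\<lambda>\<omega>. (U2 \<omega>, V2 \<omega>)) \<mu>2"
    and indep: "prob_space.indep_var M (borel \<Otimes>\<^sub>M borel) (\<lambda>\<omega>. (U1 \<omega>, V1 \<omega>))
                                      (borel \<Otimes>\<^sub>M borel) (\<lambda>\<omega>. (U2 \<omega>, V2 \<omega>))"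
    and \<mu>1: "finite_torus_measure \<mu>1" and \<mu>2: "finite_torus_measure \<mu>2" and \<nu>: "finite_torus_measure \<nu>"
    and moments: "\<And>a b c d. integral\<^sup>L \<mu>1 (torus_monomial a b c d) * integral\<^sup>L \<mu>2 (torus_monomial a b c d)
                            = integral\<^sup>L \<nu> (torus_monomial a b c d)"
  shows "has_law M (\<lambda>\<omega>. (U1 \<omega> * U2 \<omega>, V1 \<omega> * V2 \<omega>)) \<nu>"
proof -
  interpret prob_space M by (rule M)
  note law1D = has_law_torusD[OF law1 \<mu>1] and law2D = has_law_torusD[OF law2 \<mu>2]
  have [measurable]: "U1 \<in> borel_measurable M" "V1 \<in> borel_measurable M"
    "U2 \<in> borel_measurable M" "V2 \<in> borel_measurable M"
    using law1D(1) law2D(1) by (simp_all add: measurable_pair_iff comp_def)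
  show ?thesis
  proof (rule has_law_torusI[OF M _ \<nu>])
    show "(\<lambda>\<omega>. (U1 \<omega> * U2 \<omega>, V1 \<omega> * V2 \<omega>)) \<in> measurable M (borel \<Otimes>\<^sub>M borel)"
      by measurable
    show "AE \<omega> in M. (U1 \<omega> * U2 \<omega>, V1 \<omega> * V2 \<omega>) \<in> torus"
      using law1D(2) law2D(2) by eventually_elim (auto simp: norm_mult)
    fix a b c d
    have "indep_var borel (\<lambda>\<omega>. torus_monomial a b c d (U1 \<omega>, V1 \<omega>))
                     borel (\<lambda>\<omega>. torus_monomial a b c d (U2 \<omega>, V2 \<omega>))"
      using indep_var_compose[OF indep borel_measurable_torus_monomial borel_measurable_torus_monomial]
      by (simp add: comp_def)
    then show "integral\<^sup>L M (\<lambda>\<omega>. torus_monomial a b c d (U1 \<omega> * U2 \<omega>, V1 \<omega> * V2 \<omega>))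
        = integral\<^sup>L \<nu> (torus_monomial a b c d)"
      unfolding torus_monomial_mult_pair
      by (subst indep_var_lebesgue_integral) (simp_all add: law1D(3,4) law2D(3,4) moments)
  qed
qed

lemma has_law_power:
  assumes M: "prob_space M" and law: "has_law M (\<lambda>\<omega>. (U \<omega>, V \<omega>)) \<mu>"
    and \<mu>: "finite_torus_measure \<mu>" and \<nu>: "finite_torus_measure \<nu>"
    and moments: "\<And>a b c d. integral\<^sup>L \<mu> (torus_monomial (n*a) (n*b) (n*c) (n*d))
                            = integral\<^sup>L \<nu> (torus_monomial a b c d)"
  shows "has_law M (\<lambda>\<omega>. (U \<omega> ^ n, V \<omega> ^ n)) \<nu>"
proof (rule has_law_torusI[OF M _ \<nu>])
  note lawD = has_law_torusD[OF law \<mu>]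
  show "(\<lambda>\<omega>. (U \<omega> ^ n, V \<omega> ^ n)) \<in> measurable M (borel \<Otimes>\<^sub>M borel)"
    using lawD(1) by (auto simp: measurable_pair_iff comp_def)
  show "AE \<omega> in M. (U \<omega> ^ n, V \<omega> ^ n) \<in> torus"
    using lawD(2) by eventually_elim (auto simp: norm_power)
  show "integral\<^sup>L M (\<lambda>\<omega>. torus_monomial a b c d (U \<omega> ^ n, V \<omega> ^ n)) = integral\<^sup>L \<nu> (torus_monomial a b c d)"
    for a b c d
    unfolding torus_monomial_power_pair lawD(4) by (rule moments)
qed

lemma BC_plus_mult:
  assumes M: "prob_space M" and \<psi>1: "cmod \<psi>1 < 1" and \<psi>2: "cmod \<psi>2 < 1"
    and law1: "has_law M (\<lambda>\<omega>. (U1 \<omega>, V1 \<omega>)) (BC_plus \<psi>1)"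
    and law2: "has_law M (\<lambda>\<omega>. (U2 \<omega>, V2 \<omega>)) (BC_plus \<psi>2)"
    and indep: "prob_space.indep_var M (borel \<Otimes>\<^sub>M borel) (\<lambda>\<omega>. (U1 \<omega>, V1 \<omega>))
                                       (borel \<Otimes>\<^sub>M borel) (\<lambda>\<omega>. (U2 \<omega>, V2 \<omega>))"
  shows "has_law M (\<lambda>\<omega>. (U1 \<omega> * U2 \<omega>, V1 \<omega> * V2 \<omega>)) (BC_plus (\<psi>1 * \<psi>2))"
proof -
  have \<psi>12: "cmod (\<psi>1 * \<psi>2) < 1"
    using norm_mult_less[OF \<psi>1 \<psi>2] by simp
  show ?thesis
    by (rule has_law_mult[OF M law1 law2 indep finite_torus_measure_BC_plus[OF \<psi>1]
          finite_torus_measure_BC_plus[OF \<psi>2] finite_torus_measure_BC_plus[OF \<psi>12]])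
       (simp add: BC_plus_moment \<psi>1 \<psi>2 \<psi>12 poisson_coeff_mult)
qed

lemma BC_minus_mult:
  assumes M: "prob_space M" and \<psi>1: "cmod \<psi>1 < 1" and \<psi>2: "cmod \<psi>2 < 1"
    and law1: "has_law M (\<lambda>\<omega>. (U1 \<omega>, V1 \<omega>)) (BC_minus \<psi>1)"
    and law2: "has_law M (\<lambda>\<omega>. (U2 \<omega>, V2 \<omega>)) (BC_minus \<psi>2)"
    and indep: "prob_space.indep_var M (borel \<Otimes>\<^sub>M borel) (\<lambda>\<omega>. (U1 \<omega>, V1 \<omega>))
                                       (borel \<Otimes>\<^sub>M borel) (\<lambda>\<omega>. (U2 \<omega>, V2 \<omega>))"
  shows "has_law M (\<lambda>\<omega>. (U1 \<omega> * U2 \<omega>, V1 \<omega> * V2 \<omega>)) (BC_minus (\<psi>1 * \<psi>2))"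
proof -
  have \<psi>12: "cmod (\<psi>1 * \<psi>2) < 1"
    using norm_mult_less[OF \<psi>1 \<psi>2] by simp
  show ?thesis
    by (rule has_law_mult[OF M law1 law2 indep finite_torus_measure_BC_minus[OF \<psi>1]
          finite_torus_measure_BC_minus[OF \<psi>2] finite_torus_measure_BC_minus[OF \<psi>12]])
       (simp add: BC_minus_moment \<psi>1 \<psi>2 \<psi>12 poisson_coeff_mult)
qed

lemma BC_plus_minus_mult:
  assumes M: "prob_space M" and \<psi>1: "cmod \<psi>1 < 1" and \<psi>2: "cmod \<psi>2 < 1"
    and law1: "has_law M (\<lambda>\<omega>. (U1 \<omega>, V1 \<omega>)) (BC_plus \<psi>1)"
    and law2: "has_law M (\<lambda>\<omega>. (U2 \<omega>, V2 \<omega>)) (BC_minus \<psi>2)"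
    and indep: "prob_space.indep_var M (borel \<Otimes>\<^sub>M borel) (\<lambda>\<omega>. (U1 \<omega>, V1 \<omega>))
                                       (borel \<Otimes>\<^sub>M borel) (\<lambda>\<omega>. (U2 \<omega>, V2 \<omega>))"
  shows "has_law M (\<lambda>\<omega>. (U1 \<omega> * U2 \<omega>, V1 \<omega> * V2 \<omega>)) (BC_plus 0)"
  by (rule has_law_mult[OF M law1 law2 indep finite_torus_measure_BC_plus[OF \<psi>1]
        finite_torus_measure_BC_minus[OF \<psi>2] finite_torus_measure_BC_plus[of 0]])
     (auto simp: BC_plus_moment \<psi>1 BC_minus_moment \<psi>2 poisson_coeff_def)

lemma BC_plus_power:
  assumes M: "prob_space M" and \<psi>: "cmod \<psi> < 1" and "n \<ge> 1"
    and law: "has_law M (\<lambda>\<omega>. (U \<omega>, V \<omega>)) (BC_plus \<psi>)"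
  shows "has_law M (\<lambda>\<omega>. (U \<omega> ^ n, V \<omega> ^ n)) (BC_plus (\<psi> ^ n))"
proof -
  have \<psi>n: "cmod (\<psi> ^ n) < 1"
    using \<psi> \<open>n \<ge> 1\<close> by (simp add: norm_power power_less_one_iff)
  have "int (n * x) - int (n * y) = int n * (int x - int y)" for x y
    by (simp add: algebra_simps)
  then show ?thesis
    using \<open>n \<ge> 1\<close>
    by (intro has_law_power[OF M law finite_torus_measure_BC_plus[OF \<psi>] finite_torus_measure_BC_plus[OF \<psi>n]])
       (simp add: BC_plus_moment[OF \<psi>] BC_plus_moment[OF \<psi>n] poisson_coeff_power flip: mult_minus_right)
qed

lemma BC_minus_power:
  assumes M: "prob_space M" and \<psi>: "cmod \<psi> < 1" and "n \<ge> 1"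
    and law: "has_law M (\<lambda>\<omega>. (U \<omega>, V \<omega>)) (BC_minus \<psi>)"
  shows "has_law M (\<lambda>\<omega>. (U \<omega> ^ n, V \<omega> ^ n)) (BC_minus (\<psi> ^ n))"
proof -
  have \<psi>n: "cmod (\<psi> ^ n) < 1"
    using \<psi> \<open>n \<ge> 1\<close> by (simp add: norm_power power_less_one_iff)
  have "int (n * x) - int (n * y) = int n * (int x - int y)" for x y
    by (simp add: algebra_simps)
  then show ?thesis
    using \<open>n \<ge> 1\<close>
    by (intro has_law_power[OF M law finite_torus_measure_BC_minus[OF \<psi>] finite_torus_measure_BC_minus[OF \<psi>n]])
       (simp add: BC_minus_moment[OF \<psi>] BC_minus_moment[OF \<psi>n] poisson_coeff_power)
qed

theorem mainTheorem9:
  fixes M :: "'a measure"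
  assumes "prob_space M"
  shows
   "(\<forall>\<psi>1 \<psi>2 ZU1 ZV1 ZU2 ZV2. cmod \<psi>1 < 1 \<and> cmod \<psi>2 < 1
       \<and> has_law M (\<lambda>\<omega>. (ZU1 \<omega>, ZV1 \<omega>)) (BC_plus \<psi>1)
       \<and> has_law M (\<lambda>\<omega>. (ZU2 \<omega>, ZV2 \<omega>)) (BC_plus \<psi>2)
       \<and> prob_space.indep_var M (borel \<Otimes>\<^sub>M borel) (\<lambda>\<omega>. (ZU1 \<omega>, ZV1 \<omega>))
                                 (borel \<Otimes>\<^sub>M borel) (\<lambda>\<omega>. (ZU2 \<omega>, ZV2 \<omega>))
       \<longrightarrow> has_law M (\<lambda>\<omega>. (ZU1 \<omega> * ZU2 \<omega>, ZV1 \<omega> * ZV2 \<omega>)) (BC_plus (\<psi>1 * \<psi>2)))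
  \<and> (\<forall>\<psi>1 \<psi>2 ZU1 ZV1 ZU2 ZV2. cmod \<psi>1 < 1 \<and> cmod \<psi>2 < 1
       \<and> has_law M (\<lambda>\<omega>. (ZU1 \<omega>, ZV1 \<omega>)) (BC_minus \<psi>1)
       \<and> has_law M (\<lambda>\<omega>. (ZU2 \<omega>, ZV2 \<omega>)) (BC_minus \<psi>2)
       \<and> prob_space.indep_var M (borel \<Otimes>\<^sub>M borel) (\<lambda>\<omega>. (ZU1 \<omega>, ZV1 \<omega>))
                                 (borel \<Otimes>\<^sub>M borel) (\<lambda>\<omega>. (ZU2 \<omega>, ZV2 \<omega>))
       \<longrightarrow> has_law M (\<lambda>\<omega>. (ZU1 \<omega> * ZU2 \<omega>, ZV1 \<omega> * ZV2 \<omega>)) (BC_minus (\<psi>1 * \<psi>2)))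
  \<and> (\<forall>\<psi>1 \<psi>2 ZU1 ZV1 ZU2 ZV2. cmod \<psi>1 < 1 \<and> cmod \<psi>2 < 1
       \<and> has_law M (\<lambda>\<omega>. (ZU1 \<omega>, ZV1 \<omega>)) (BC_plus \<psi>1)
       \<and> has_law M (\<lambda>\<omega>. (ZU2 \<omega>, ZV2 \<omega>)) (BC_minus \<psi>2)
       \<and> prob_space.indep_var M (borel \<Otimes>\<^sub>M borel) (\<lambda>\<omega>. (ZU1 \<omega>, ZV1 \<omega>))
                                 (borel \<Otimes>\<^sub>M borel) (\<lambda>\<omega>. (ZU2 \<omega>, ZV2 \<omega>))
       \<longrightarrow> has_law M (\<lambda>\<omega>. (ZU1 \<omega> * ZU2 \<omega>, ZV1 \<omega> * ZV2 \<omega>)) (BC_plus 0))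
  \<and> (\<forall>\<psi> ZU ZV (n::nat). cmod \<psi> < 1 \<and> n \<ge> 1
       \<and> has_law M (\<lambda>\<omega>. (ZU \<omega>, ZV \<omega>)) (BC_plus \<psi>)
       \<longrightarrow> has_law M (\<lambda>\<omega>. (ZU \<omega> ^ n, ZV \<omega> ^ n)) (BC_plus (\<psi> ^ n)))
  \<and> (\<forall>\<psi> ZU ZV (n::nat). cmod \<psi> < 1 \<and> n \<ge> 1
       \<and> has_law M (\<lambda>\<omega>. (ZU \<omega>, ZV \<omega>)) (BC_minus \<psi>)
       \<longrightarrow> has_law M (\<lambda>\<omega>. (ZU \<omega> ^ n, ZV \<omega> ^ n)) (BC_minus (\<psi> ^ n)))"
  by (intro conjI allI impI; elim conjE)
     (rule BC_plus_mult[OF assms] BC_minus_mult[OF assms] BC_plus_minus_mult[OF assms]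
        BC_plus_power[OF assms] BC_minus_power[OF assms]; assumption)+

end
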